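(* Consider the event-triggered distributed estimator described in the context, and suppose: (i) the communication graph is connected, i.e. $\lambda_2(\mathcal{L})>0$; (ii) $G=\sum_{i=1}^N H_i^TH_i$ is full rank; (iii) the step sizes are $\alpha(t)=\frac{a}{(t+1)^{\tau_1}}$ and $\beta(t)=\frac{b}{(t+1)^{\tau_2}}$ with $a,b>0$, $0<\tau_2\le\tau_1\le 1$, and $\tau_1>\max\{\tau_2+\frac{1}{2+\epsilon_1},0.5\}$, where $\epsilon_1>0$ is such that $\mathbb{E}\{\|V(t)\|^{2+\epsilon_1}\}<\infty$. Let $\rho_0=\min_{j\in\mathcal{V}}\rho_j$. If $\rho_0>\tau_1-\tau_2$, then for every agent $i\in\mathcal{V}$ the estimate sequence is asymptotically unbiased: $\lim_{t\to\infty}\mathbb{E}\{x_i(t)\}=\theta$.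
   Context: An unknown parameter $\theta\in\mathbb{R}^n$ is observed by $N$ agents $\mathcal{V}=\{1,\dots,N\}$ via $y_i(t)=H_i\theta+v_i(t)$, $t=0,1,2,\dots$, where $H_i\in\mathbb{R}^{m_i\times n}$ is known and the noise $v_i(t)\in\mathbb{R}^{m_i}$ is zero mean with covariance $R_i$. The stacked noise $V(t)=[v_1(t)^T,\dots,v_N(t)^T]^T$ is i.i.d. over time (noises of different agents at the same time may be correlated). Agents communicate over an undirected graph without self-loops with adjacency matrix $\mathcal{A}=[a_{ij}]\in\{0,1\}^{N\times N}$, neighbor sets $\mathcal{N}_i=\{j: a_{ij}=1\}$, degree matrix $\mathcal{D}$ and Laplacian $\mathcal{L}=\mathcal{D}-\mathcal{A}$. Each agent $i$ has a threshold exponent $\rho_i>0$. Agent $i$ keeps an estimate $x_i(t)\in\mathbb{R}^n$ (arbitrary deterministic initial value $x_i(0)$, which is the first transmitted value). Let $t_k^i$ be the latest triggering (transmission) time of agent $i$. At time $t$, agent $i$ triggers (broadcasts $x_i(t)$ to its neighbors, which then becomes its latest transmitted value) iff $\|x_i(t)-x_i(t_k^i)\|>\frac{1}{(t+1)^{\rho_i}}$. Denoting by $x_j(t_k^j)$ the latest value transmitted by agent $j$ up to and including time $t$, the estimator is $x_i(t+1)=x_i(t)+\alpha(t)H_i^T\big(y_i(t)-H_ix_i(t)\big)+\beta(t)\sum_{j\in\mathcal{N}_i}\big(x_j(t_k^j)-x_i(t)\big)$. *)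

theory Defs
  imports "HOL-Analysis.Analysis" "HOL-Probability.Probability"
begin

text \<open>Agents are indexed 0..N-1. The observation matrix H_i (m_i x n) is given by its rows:
  row k of H_i (for k < m i) is the vector H i k. Vectors of R^{m_i} are functions nat => real,
  only components k < m i are relevant.\<close>

definition Hmul :: "(nat \<Rightarrow> nat \<Rightarrow> real^'n) \<Rightarrow> nat \<Rightarrow> real^'n \<Rightarrow> nat \<Rightarrow> real" where
  "Hmul H i x = (\<lambda>k. H i k \<bullet> x)"

definition HTmul :: "(nat \<Rightarrow> nat \<Rightarrow> real^'n) \<Rightarrow> (nat \<Rightarrow> nat) \<Rightarrow> nat \<Rightarrow> (nat \<Rightarrow> real) \<Rightarrow> real^'n" where
  "HTmul H m i w = (\<Sum>k<m i. w k *\<^sub>R H i k)"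

definition Gmat :: "nat \<Rightarrow> (nat \<Rightarrow> nat \<Rightarrow> real^'n) \<Rightarrow> (nat \<Rightarrow> nat) \<Rightarrow> real^'n^'n" where
  "Gmat N H m = (\<Sum>i<N. \<Sum>k<m i. (\<chi> r c. (H i k $ r) * (H i k $ c)))"

text \<open>State of the estimator at time t: pair (x, l) where x i = x_i(t) and
  l i = latest value transmitted by agent i up to and including time t.
  y t i k is component k of the measurement y_i(t); alpha, beta step sizes.\<close>

fun est :: "nat \<Rightarrow> (nat \<Rightarrow> nat \<Rightarrow> bool) \<Rightarrow> (nat \<Rightarrow> nat \<Rightarrow> real^'n) \<Rightarrow> (nat \<Rightarrow> nat)
   \<Rightarrow> (nat \<Rightarrow> real) \<Rightarrow> (nat \<Rightarrow> real) \<Rightarrow> (nat \<Rightarrow> real) \<Rightarrow> (nat \<Rightarrow> real^'n)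
   \<Rightarrow> (nat \<Rightarrow> nat \<Rightarrow> nat \<Rightarrow> real) \<Rightarrow> nat \<Rightarrow> (nat \<Rightarrow> real^'n) \<times> (nat \<Rightarrow> real^'n)" where
  "est N adj H m alpha beta \<rho> x0 y 0 = (x0, x0)"
| "est N adj H m alpha beta \<rho> x0 y (Suc t) =
     (let x = fst (est N adj H m alpha beta \<rho> x0 y t);
          l = snd (est N adj H m alpha beta \<rho> x0 y t);
          x' = (\<lambda>i. x i + alpha t *\<^sub>R HTmul H m i (\<lambda>k. y t i k - Hmul H i (x i) k)
                       + beta t *\<^sub>R (\<Sum>j\<in>{j. j < N \<and> adj i j}. l j - x i));
          l' = (\<lambda>i. if norm (x' i - l i) > 1 / (real (Suc t) + 1) powr \<rho> i then x' i else l i)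
      in (x', l'))"

text \<open>Stacked noise vector V(t), as an element of the product space indexed by (agent, component).\<close>
definition stackV :: "nat \<Rightarrow> (nat \<Rightarrow> nat) \<Rightarrow> (nat \<Rightarrow> nat \<Rightarrow> real) \<Rightarrow> nat \<times> nat \<Rightarrow> real" where
  "stackV N m w = (\<lambda>(i, k). if i < N \<and> k < m i then w i k else 0)"

definition normV :: "nat \<Rightarrow> (nat \<Rightarrow> nat) \<Rightarrow> (nat \<Rightarrow> nat \<Rightarrow> real) \<Rightarrow> real" where
  "normV N m w = sqrt (\<Sum>i<N. \<Sum>k<m i. (w i k)\<^sup>2)"

definition stack_space :: "(nat \<times> nat \<Rightarrow> real) measure" where
  "stack_space = Pi\<^sub>M UNIV (\<lambda>_. borel)"

end

theory Submission
  imports Defs "HOL-Real_Asymp.Real_Asymp"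
begin

text \<open>Taking expectations removes the zero-mean noise, so the mean error \<open>E x_i(t) - \<theta>\<close>
  follows the deterministic consensus+innovations recursion, perturbed only through the
  difference between last transmitted and current estimates. The triggering rule bounds that
  difference by \<open>(t+1)^-\<rho>\<^sub>0\<close>, so the perturbation is \<open>\<beta>(t) (t+1)^-\<rho>\<^sub>0 = o(\<alpha>(t))\<close> as
  \<open>\<rho>\<^sub>0 > \<tau>\<^sub>1 - \<tau>\<^sub>2\<close>. For small steps the unperturbed map contracts the squared error norm by
  \<open>\<alpha> \<Sum>|H_i e_i|\<^sup>2 + \<beta>/2 \<Sum>|e_i - e_j|\<^sup>2\<close>, which by connectivity and the rank condition is at least
  \<open>c \<alpha>\<close> times the squared norm; since \<open>\<Sum> \<alpha>(t) = \<infinity>\<close> the error norm tends to zero.\<close>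

lemma norm_sum_sq_le:
  fixes w :: "'i \<Rightarrow> 'a::real_normed_vector"
  shows "(norm (\<Sum>j\<in>S. w j))\<^sup>2 \<le> real (card S) * (\<Sum>j\<in>S. (norm (w j))\<^sup>2)"
proof -
  have "(norm (\<Sum>j\<in>S. w j))\<^sup>2 \<le> (\<Sum>j\<in>S. norm (w j))\<^sup>2"
    by (simp add: power_mono norm_sum)
  also have "\<dots> \<le> (\<Sum>j\<in>S. (norm (w j))\<^sup>2) * card S"
    by (rule sum_squared_le_sum_of_squares)
  finally show ?thesis by (simp add: mult.commute)
qed

lemma norm_add_sq_le:
  fixes x y :: "'a::real_normed_vector"
  shows "(norm (x + y))\<^sup>2 \<le> 2 * (norm x)\<^sup>2 + 2 * (norm y)\<^sup>2"
proof -
  have "(norm (x + y))\<^sup>2 \<le> (norm x + norm y)\<^sup>2"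
    by (simp add: power_mono norm_triangle_ineq)
  also have "\<dots> \<le> 2 * (norm x)\<^sup>2 + 2 * (norm y)\<^sup>2"
    using sum_squared_le_sum_of_squares_2 by (smt (verit) power2_sum zero_le_power2 power2_diff)
  finally show ?thesis .
qed

lemma sqrt_one_minus_le: "0 \<le> x \<Longrightarrow> x \<le> 1 \<Longrightarrow> sqrt (1 - x) \<le> 1 - x / 2"
  by (rule real_le_lsqrt) (auto simp: power2_eq_square algebra_simps)

lemma sum_filter_lessThan:
  fixes N :: nat and f :: "nat \<Rightarrow> 'a::comm_monoid_add"
  shows "(\<Sum>j\<in>{j. j < N \<and> P j}. f j) = (\<Sum>j<N. if P j then f j else 0)"
proof -
  have "{j. j < N \<and> P j} = {j\<in>{..<N}. P j}" by auto
  then show ?thesis by (metis (no_types) sum.inter_filter[OF finite_lessThan])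
qed

section \<open>Perturbed scalar contractions\<close>

text \<open>Otherwise each step decreases \<open>u\<close> by at least \<open>s \<gamma>(t)\<close>, making \<open>\<Sum> \<gamma>\<close> bounded.\<close>
lemma contraction_towards_reaches_below:
  fixes u \<gamma> :: "nat \<Rightarrow> real"
  assumes u_nonneg: "\<And>t. 0 \<le> u t" and s: "s > 0"
    and step: "\<And>t. t \<ge> T \<Longrightarrow> 0 \<le> \<gamma> t \<and> \<gamma> t \<le> 1 \<and> u (Suc t) \<le> (1 - \<gamma> t) * (u t - s) + s"
    and divergent: "\<not> summable \<gamma>"
  shows "\<exists>t0\<ge>T. u t0 < 2 * s"
proof (rule ccontr)
  assume "\<not> ?thesis"
  hence big: "\<And>t. t \<ge> T \<Longrightarrow> 2 * s \<le> u t" by (meson not_less)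
  have decrease: "s * (\<Sum>k<n. \<gamma> (k + T)) \<le> u T - u (n + T)" for n
  proof (induction n)
    case (Suc n)
    have "s * \<gamma> (n + T) \<le> (u (n + T) - s) * \<gamma> (n + T)"
      using big[of "n + T"] step[of "n + T"] by (intro mult_right_mono) auto
    with step[of "n + T"] Suc.IH show ?case by (simp add: algebra_simps)
  qed simp
  have "summable (\<lambda>k. \<gamma> (k + T))"
  proof (rule summableI_nonneg_bounded)
    show "0 \<le> \<gamma> (k + T)" for k using step[of "k + T"] by simp
    show "(\<Sum>k<n. \<gamma> (k + T)) \<le> u T / s" for n
      using decrease[of n] u_nonneg[of "n + T"] s by (simp add: field_simps)
  qed
  with divergent show False by (simp add: summable_iff_shift)
qed

lemma eventually_less_of_contraction_towards:
  fixes u \<gamma> :: "nat \<Rightarrow> real"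
  assumes u_nonneg: "\<And>t. 0 \<le> u t" and s: "s > 0"
    and step: "\<And>t. t \<ge> T \<Longrightarrow> 0 \<le> \<gamma> t \<and> \<gamma> t \<le> 1 \<and> u (Suc t) \<le> (1 - \<gamma> t) * (u t - s) + s"
    and divergent: "\<not> summable \<gamma>"
  shows "eventually (\<lambda>t. u t < 2 * s) sequentially"
proof -
  have stays_below: "u (Suc t) < 2 * s" if "t \<ge> T" "u t < 2 * s" for t
  proof (cases "u t \<ge> s")
    case True
    with step[OF that(1)] have "(1 - \<gamma> t) * (u t - s) \<le> u t - s"
      by (simp add: mult_left_le_one_le)
    with step[OF that(1)] that(2) show ?thesis by linarith
  next
    case False
    with step[OF that(1)] have "(1 - \<gamma> t) * (u t - s) \<le> 0"
      by (intro mult_nonneg_nonpos) auto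
    with step[OF that(1)] s show ?thesis by linarith
  qed
  obtain t0 where t0: "t0 \<ge> T" "u t0 < 2 * s"
    using contraction_towards_reaches_below[OF u_nonneg s step divergent] by blast
  have "u (t0 + n) < 2 * s" for n
    by (induction n) (use t0 stays_below in auto)
  then show ?thesis
    unfolding eventually_sequentially by (metis le_add_diff_inverse)
qed

lemma tendsto_zero_of_perturbed_contraction:
  fixes u \<gamma> w :: "nat \<Rightarrow> real"
  assumes u_nonneg: "\<And>t. 0 \<le> u t"
    and step: "eventually (\<lambda>t. 0 \<le> \<gamma> t \<and> \<gamma> t \<le> 1 \<and> u (Suc t) \<le> (1 - \<gamma> t) * u t + w t) sequentially"
    and divergent: "\<not> summable \<gamma>"
    and negligible: "w \<in> o(\<gamma>)"
  shows "u \<longlonglongrightarrow> 0"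
proof (rule order_tendstoI)
  fix r :: real assume "r < 0"
  then show "eventually (\<lambda>t. r < u t) sequentially"
    using u_nonneg by (intro always_eventually allI) (meson less_le_trans)
next
  fix r :: real assume r: "r > 0"
  from eventually_conj[OF step landau_o.smallD[OF negligible, of "r / 2"]] r
  obtain T where T: "\<And>t. t \<ge> T \<Longrightarrow> 0 \<le> \<gamma> t \<and> \<gamma> t \<le> 1
      \<and> u (Suc t) \<le> (1 - \<gamma> t) * u t + w t \<and> norm (w t) \<le> r / 2 * norm (\<gamma> t)"
    by (auto simp: eventually_sequentially)
  have "0 \<le> \<gamma> t \<and> \<gamma> t \<le> 1 \<and> u (Suc t) \<le> (1 - \<gamma> t) * (u t - r / 2) + r / 2"
    if "t \<ge> T" for t
  proof -
    have "(1 - \<gamma> t) * (u t - r / 2) + r / 2 = (1 - \<gamma> t) * u t + r / 2 * \<gamma> t"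
      by (simp add: field_simps)
    with T[OF that] show ?thesis by (auto simp: abs_le_iff)
  qed
  from eventually_less_of_contraction_towards[OF u_nonneg _ this divergent] r
  show "eventually (\<lambda>t. u t < r) sequentially" by simp
qed

section \<open>Energy decrease of the noise-free update\<close>

definition sq_norm_sum :: "nat \<Rightarrow> (nat \<Rightarrow> 'a::real_normed_vector) \<Rightarrow> real" where
  "sq_norm_sum N e = (\<Sum>i<N. (norm (e i))\<^sup>2)"

definition disagreement :: "nat \<Rightarrow> (nat \<Rightarrow> nat \<Rightarrow> bool) \<Rightarrow> (nat \<Rightarrow> 'a::real_normed_vector) \<Rightarrow> real" where
  "disagreement N adj e = (\<Sum>i<N. \<Sum>j\<in>{j. j < N \<and> adj i j}. (norm (e i - e j))\<^sup>2)"

definition obs_energy :: "nat \<Rightarrow> (nat \<Rightarrow> nat \<Rightarrow> real^'n) \<Rightarrow> (nat \<Rightarrow> nat) \<Rightarrow> (nat \<Rightarrow> real^'n) \<Rightarrow> real" where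
  "obs_energy N H m e = (\<Sum>i<N. \<Sum>k<m i. (H i k \<bullet> e i)\<^sup>2)"

definition obs_gain :: "nat \<Rightarrow> (nat \<Rightarrow> nat \<Rightarrow> real^'n) \<Rightarrow> (nat \<Rightarrow> nat) \<Rightarrow> real" where
  "obs_gain N H m = (\<Sum>i<N. \<Sum>k<m i. (norm (H i k))\<^sup>2)"

text \<open>The estimator's update acting on the error \<open>x - \<theta>\<close> when there is no noise and every agent
  transmits at every step.\<close>
definition mean_update :: "nat \<Rightarrow> (nat \<Rightarrow> nat \<Rightarrow> bool) \<Rightarrow> (nat \<Rightarrow> nat \<Rightarrow> real^'n) \<Rightarrow> (nat \<Rightarrow> nat)
   \<Rightarrow> real \<Rightarrow> real \<Rightarrow> (nat \<Rightarrow> real^'n) \<Rightarrow> nat \<Rightarrow> real^'n" where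
  "mean_update N adj H m al be e = (\<lambda>i. e i - al *\<^sub>R HTmul H m i (Hmul H i (e i))
       + be *\<^sub>R (\<Sum>j\<in>{j. j < N \<and> adj i j}. e j - e i))"

lemma sq_norm_sum_nonneg: "sq_norm_sum N e \<ge> 0"
  unfolding sq_norm_sum_def by (simp add: sum_nonneg)

lemma disagreement_nonneg: "disagreement N adj e \<ge> 0"
  unfolding disagreement_def by (simp add: sum_nonneg)

lemma obs_energy_nonneg: "obs_energy N H m e \<ge> 0"
  unfolding obs_energy_def by (simp add: sum_nonneg)

lemma obs_gain_nonneg: "obs_gain N H m \<ge> 0"
  unfolding obs_gain_def by (simp add: sum_nonneg)

lemma obs_gain_ge_row: "i < N \<Longrightarrow> (\<Sum>k<m i. (norm (H i k))\<^sup>2) \<le> obs_gain N H m"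
  unfolding obs_gain_def by (intro member_le_sum) (auto intro: sum_nonneg)

lemma inner_HTmul_Hmul: "x \<bullet> HTmul H m i (Hmul H i x) = (\<Sum>k<m i. (H i k \<bullet> x)\<^sup>2)"
  unfolding HTmul_def Hmul_def
  by (simp add: inner_sum_right power2_eq_square inner_commute)

lemma norm_HTmul_Hmul_sq_le:
  "(norm (HTmul H m i (Hmul H i x)))\<^sup>2 \<le> (\<Sum>k<m i. (norm (H i k))\<^sup>2) * (\<Sum>k<m i. (H i k \<bullet> x)\<^sup>2)"
proof -
  have "norm (HTmul H m i (Hmul H i x)) \<le> (\<Sum>k<m i. \<bar>H i k \<bullet> x\<bar> * norm (H i k))"
    unfolding HTmul_def Hmul_def
    by (rule order_trans[OF norm_sum]) simp
  hence "(norm (HTmul H m i (Hmul H i x)))\<^sup>2 \<le> (\<Sum>k<m i. \<bar>H i k \<bullet> x\<bar> * norm (H i k))\<^sup>2"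
    by (simp add: power_mono)
  also have "\<dots> \<le> (\<Sum>k<m i. (\<bar>H i k \<bullet> x\<bar>)\<^sup>2) * (\<Sum>k<m i. (norm (H i k))\<^sup>2)"
    by (rule Cauchy_Schwarz_ineq_sum)
  finally show ?thesis by (simp add: mult.commute)
qed

lemma card_neighbors_le: "card {j. j < N \<and> adj i j} \<le> N"
  by (metis (no_types, lifting) card_lessThan card_mono finite_lessThan lessThan_iff mem_Collect_eq subsetI)

lemma sum_inner_neighbors_eq_half_disagreement:
  fixes e :: "nat \<Rightarrow> 'a::real_inner"
  assumes sym: "\<And>i j. adj i j = adj j i"
  shows "(\<Sum>i<N. \<Sum>j\<in>{j. j < N \<and> adj i j}. e i \<bullet> (e i - e j)) = disagreement N adj e / 2"
proof -
  define g where "g i j = (if adj i j then e i \<bullet> (e i - e j) else 0)" for i j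
  have lhs: "(\<Sum>i<N. \<Sum>j\<in>{j. j < N \<and> adj i j}. e i \<bullet> (e i - e j)) = (\<Sum>i<N. \<Sum>j<N. g i j)"
    unfolding g_def sum_filter_lessThan ..
  have edge: "(norm (e i - e j))\<^sup>2 = e i \<bullet> (e i - e j) + e j \<bullet> (e j - e i)" for i j
    by (simp add: power2_norm_eq_inner inner_diff_left inner_diff_right inner_commute)
  have "disagreement N adj e = (\<Sum>i<N. \<Sum>j<N. g i j + g j i)"
    unfolding disagreement_def g_def sum_filter_lessThan
    by (auto simp: sym edge intro!: sum.cong)
  also have "\<dots> = 2 * (\<Sum>i<N. \<Sum>j<N. g i j)"
    using sum.swap[of g "{..<N}" "{..<N}"] by (simp add: sum.distrib)
  finally show ?thesis using lhs by simp
qed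

lemma norm_sum_neighbors_sq_le:
  "(norm (\<Sum>j\<in>{j. j < N \<and> adj i j}. e j - e i))\<^sup>2
    \<le> real N * (\<Sum>j\<in>{j. j < N \<and> adj i j}. (norm (e i - e j))\<^sup>2)"
proof -
  have "(norm (\<Sum>j\<in>{j. j < N \<and> adj i j}. e j - e i))\<^sup>2
      \<le> real (card {j. j < N \<and> adj i j}) * (\<Sum>j\<in>{j. j < N \<and> adj i j}. (norm (e i - e j))\<^sup>2)"
    using norm_sum_sq_le[of "\<lambda>j. e j - e i" "{j. j < N \<and> adj i j}"] by (simp add: norm_minus_commute)
  also have "\<dots> \<le> real N * (\<Sum>j\<in>{j. j < N \<and> adj i j}. (norm (e i - e j))\<^sup>2)"
    by (intro mult_right_mono sum_nonneg) (auto simp: card_neighbors_le)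
  finally show ?thesis .
qed

lemma norm_mean_update_sq_le:
  fixes e :: "nat \<Rightarrow> real^'n"
  assumes al: "al \<ge> 0" and be: "be \<ge> 0" and i: "i < N"
  shows "(norm (mean_update N adj H m al be e i))\<^sup>2 \<le> (norm (e i))\<^sup>2
     - 2 * al * (\<Sum>k<m i. (H i k \<bullet> e i)\<^sup>2)
     - 2 * be * (\<Sum>j\<in>{j. j < N \<and> adj i j}. e i \<bullet> (e i - e j))
     + 2 * al\<^sup>2 * obs_gain N H m * (\<Sum>k<m i. (H i k \<bullet> e i)\<^sup>2)
     + 2 * be\<^sup>2 * real N * (\<Sum>j\<in>{j. j < N \<and> adj i j}. (norm (e i - e j))\<^sup>2)"
proof -
  define A where "A = HTmul H m i (Hmul H i (e i))"
  define L where "L = (\<Sum>j\<in>{j. j < N \<and> adj i j}. e j - e i)"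
  define Q where "Q = (\<Sum>k<m i. (H i k \<bullet> e i)\<^sup>2)"
  define P where "P = (\<Sum>j\<in>{j. j < N \<and> adj i j}. e i \<bullet> (e i - e j))"
  define D where "D = (\<Sum>j\<in>{j. j < N \<and> adj i j}. (norm (e i - e j))\<^sup>2)"
  define g where "g = al *\<^sub>R A - be *\<^sub>R L"
  have update: "mean_update N adj H m al be e i = e i - g"
    unfolding mean_update_def g_def A_def L_def by (simp add: algebra_simps)
  have expand: "(norm (e i - g))\<^sup>2 = (norm (e i))\<^sup>2 - 2 * (e i \<bullet> g) + (norm g)\<^sup>2"
    by (simp add: power2_norm_eq_inner inner_diff_left inner_diff_right inner_commute)
  have "e i \<bullet> L = - P" unfolding L_def P_def
    by (simp add: inner_sum_right inner_diff_right sum_negf[symmetric] algebra_simps)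
  hence cross: "e i \<bullet> g = al * Q + be * P"
    unfolding g_def A_def Q_def by (simp add: inner_diff_right inner_HTmul_Hmul)
  have "(norm A)\<^sup>2 \<le> obs_gain N H m * Q"
    using norm_HTmul_Hmul_sq_le[of H m i "e i"] obs_gain_ge_row[OF i, where H = H and m = m]
    unfolding A_def Q_def by (meson mult_right_mono order_trans sum_nonneg zero_le_power2)
  moreover have "(norm L)\<^sup>2 \<le> real N * D"
    unfolding L_def D_def by (rule norm_sum_neighbors_sq_le)
  moreover have "(norm g)\<^sup>2 \<le> 2 * al\<^sup>2 * (norm A)\<^sup>2 + 2 * be\<^sup>2 * (norm L)\<^sup>2"
    using norm_add_sq_le[of "al *\<^sub>R A" "- (be *\<^sub>R L)"] al be unfolding g_def
    by (simp add: power_mult_distrib)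
  ultimately have "(norm g)\<^sup>2 \<le> 2 * al\<^sup>2 * obs_gain N H m * Q + 2 * be\<^sup>2 * real N * D"
    by (smt (verit, best) mult.assoc mult_left_mono zero_le_power2)
  then show ?thesis
    unfolding update expand cross Q_def[symmetric] P_def[symmetric] D_def[symmetric] by simp
qed

lemma sq_norm_sum_mean_update_le:
  fixes e :: "nat \<Rightarrow> real^'n"
  assumes sym: "\<And>i j. adj i j = adj j i"
    and al: "al \<ge> 0" "2 * al * obs_gain N H m \<le> 1"
    and be: "be \<ge> 0" "4 * be * real N \<le> 1"
  shows "sq_norm_sum N (mean_update N adj H m al be e)
    \<le> sq_norm_sum N e - al * obs_energy N H m e - be / 2 * disagreement N adj e"
proof -
  let ?Q = "obs_energy N H m e" and ?D = "disagreement N adj e" and ?h = "obs_gain N H m"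
  have "sq_norm_sum N (mean_update N adj H m al be e)
      \<le> (\<Sum>i<N. (norm (e i))\<^sup>2 - 2 * al * (\<Sum>k<m i. (H i k \<bullet> e i)\<^sup>2)
         - 2 * be * (\<Sum>j\<in>{j. j < N \<and> adj i j}. e i \<bullet> (e i - e j))
         + 2 * al\<^sup>2 * ?h * (\<Sum>k<m i. (H i k \<bullet> e i)\<^sup>2)
         + 2 * be\<^sup>2 * real N * (\<Sum>j\<in>{j. j < N \<and> adj i j}. (norm (e i - e j))\<^sup>2))"
    unfolding sq_norm_sum_def using al be by (intro sum_mono norm_mean_update_sq_le) auto
  also have "\<dots> = sq_norm_sum N e - 2 * al * ?Q
      - 2 * be * (\<Sum>i<N. \<Sum>j\<in>{j. j < N \<and> adj i j}. e i \<bullet> (e i - e j))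
      + 2 * al\<^sup>2 * ?h * ?Q + 2 * be\<^sup>2 * real N * ?D"
    unfolding sq_norm_sum_def obs_energy_def disagreement_def
    by (simp add: sum.distrib sum_subtractf sum_distrib_left)
  also have "\<dots> = sq_norm_sum N e - al * ?Q - be / 2 * ?D
      - al * (1 - 2 * al * ?h) * ?Q - be / 2 * (1 - 4 * be * real N) * ?D"
    unfolding sum_inner_neighbors_eq_half_disagreement[OF sym] by (simp add: power2_eq_square algebra_simps)
  also have "\<dots> \<le> sq_norm_sum N e - al * ?Q - be / 2 * ?D"
    using al be obs_energy_nonneg[of N H m e] disagreement_nonneg[of N adj e]
    by (smt (verit, best) mult_nonneg_nonneg divide_nonneg_nonneg)
  finally show ?thesis .
qed

section \<open>Coercivity from connectivity and observability\<close>

lemma edge_sq_le_disagreement: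
  assumes "q < N" "r < N" "adj q r"
  shows "(norm (e q - e r))\<^sup>2 \<le> disagreement N adj e"
proof -
  have "(norm (e q - e r))\<^sup>2 \<le> (\<Sum>j\<in>{j. j < N \<and> adj q j}. (norm (e q - e j))\<^sup>2)"
    using assms by (intro member_le_sum) auto
  also have "\<dots> \<le> disagreement N adj e"
    unfolding disagreement_def using assms
    by (intro member_le_sum[where f = "\<lambda>i. \<Sum>j\<in>{j. j < N \<and> adj i j}. (norm (e i - e j))\<^sup>2"])
      (auto intro: sum_nonneg)
  finally show ?thesis .
qed

lemma path_sq_le_disagreement:
  assumes "(p, q) \<in> {(p, q). p < N \<and> q < N \<and> adj p q}\<^sup>*"
  shows "\<exists>K\<ge>0. \<forall>e::nat \<Rightarrow> 'a::real_normed_vector. (norm (e p - e q))\<^sup>2 \<le> K * disagreement N adj e"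
  using assms
proof (induction rule: rtrancl_induct)
  case base
  then show ?case by auto
next
  case (step q r)
  then obtain K where K: "K \<ge> 0"
    "\<And>e::nat \<Rightarrow> 'a. (norm (e p - e q))\<^sup>2 \<le> K * disagreement N adj e" by blast
  have "(norm (e p - e r))\<^sup>2 \<le> (2 * K + 2) * disagreement N adj e" for e :: "nat \<Rightarrow> 'a"
  proof -
    have "(norm (e p - e r))\<^sup>2 \<le> 2 * (norm (e p - e q))\<^sup>2 + 2 * (norm (e q - e r))\<^sup>2"
      using norm_add_sq_le[of "e p - e q" "e q - e r"] by simp
    also have "\<dots> \<le> 2 * (K * disagreement N adj e) + 2 * disagreement N adj e"
      using K(2)[of e] edge_sq_le_disagreement[of q N r adj e] step(2) by auto
    finally show ?thesis by (simp add: algebra_simps)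
  qed
  then show ?case using K(1) by (intro exI[of _ "2 * K + 2"]) auto
qed

lemma spread_le_disagreement:
  assumes connected: "\<forall>i<N. \<forall>j<N. (i, j) \<in> {(p, q). p < N \<and> q < N \<and> adj p q}\<^sup>*"
  shows "\<exists>C\<ge>0. \<forall>e::nat \<Rightarrow> 'a::real_normed_vector.
    (\<Sum>i<N. (norm (e 0 - e i))\<^sup>2) \<le> C * disagreement N adj e"
proof -
  have "\<forall>i\<in>{..<N}. \<exists>K\<ge>0. \<forall>e::nat \<Rightarrow> 'a. (norm (e 0 - e i))\<^sup>2 \<le> K * disagreement N adj e"
    using connected path_sq_le_disagreement[of 0 _ N adj] by auto
  then obtain K where K: "\<And>i. i < N \<Longrightarrow> K i \<ge> 0"
    "\<And>i (e::nat \<Rightarrow> 'a). i < N \<Longrightarrow> (norm (e 0 - e i))\<^sup>2 \<le> K i * disagreement N adj e"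
    by (metis lessThan_iff bchoice)
  have "(\<Sum>i<N. (norm (e 0 - e i))\<^sup>2) \<le> (\<Sum>i<N. K i) * disagreement N adj e" for e :: "nat \<Rightarrow> 'a"
    unfolding sum_distrib_right by (intro sum_mono K(2)) auto
  moreover have "(\<Sum>i<N. K i) \<ge> 0" using K(1) by (intro sum_nonneg) auto
  ultimately show ?thesis by blast
qed

lemma Gmat_mult_vec: "Gmat N H m *v z = (\<Sum>i<N. \<Sum>k<m i. (H i k \<bullet> z) *\<^sub>R H i k)"
  unfolding Gmat_def
  by (simp add: vec_eq_iff matrix_vector_mult_def inner_vec_def sum_distrib_left sum_distrib_right
      sum.swap[of _ UNIV] mult_ac)

lemma obs_form_coercive:
  fixes H :: "nat \<Rightarrow> nat \<Rightarrow> real^'n"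
  assumes rank: "rank (Gmat N H m) = CARD('n)"
  shows "\<exists>g>0. \<forall>z::real^'n. g * (norm z)\<^sup>2 \<le> (\<Sum>i<N. \<Sum>k<m i. (H i k \<bullet> z)\<^sup>2)"
proof -
  define q where "q z = (\<Sum>i<N. \<Sum>k<m i. (H i k \<bullet> z)\<^sup>2)" for z :: "real^'n"
  have q_nonneg: "q z \<ge> 0" for z unfolding q_def by (simp add: sum_nonneg)
  have q_hom: "q (c *\<^sub>R z) = c\<^sup>2 * q z" for c z
    unfolding q_def by (simp add: sum_distrib_left power_mult_distrib)
  have q_definite: "z = 0" if "q z = 0" for z
  proof -
    from that have "\<forall>i<N. \<forall>k<m i. H i k \<bullet> z = 0"
      unfolding q_def by (simp add: sum_nonneg sum_nonneg_eq_0_iff)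
    hence "Gmat N H m *v z = Gmat N H m *v 0" by (simp add: Gmat_mult_vec)
    moreover have "inj ((*v) (Gmat N H m))" using rank full_rank_injective by blast
    ultimately show "z = 0" by (meson injD)
  qed
  obtain u where u: "u \<in> sphere 0 1" "\<And>y. y \<in> sphere 0 1 \<Longrightarrow> q u \<le> q y"
    using continuous_attains_inf[OF compact_sphere, of 0 1 q]
    unfolding q_def by (force intro: continuous_intros)
  have "u \<noteq> 0" using u(1) by auto
  hence "q u > 0" using q_definite q_nonneg[of u] by force
  moreover have "q u * (norm z)\<^sup>2 \<le> q z" for z
  proof (cases "z = 0")
    case True then show ?thesis using q_nonneg[of 0] by simp
  next
    case False
    define w where "w = (1 / norm z) *\<^sub>R z"
    have "w \<in> sphere 0 1" using False unfolding w_def by (simp add: norm_scaleR)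
    moreover have "q z = (norm z)\<^sup>2 * q w"
      using q_hom[of "norm z" w] False unfolding w_def by simp
    ultimately show ?thesis using u(2) by (simp add: mult.commute mult_right_mono)
  qed
  ultimately show ?thesis unfolding q_def by blast
qed

lemma sq_norm_sum_le_spread:
  "sq_norm_sum N e \<le> 2 * (\<Sum>i<N. (norm (e 0 - e i))\<^sup>2) + 2 * real N * (norm (e 0))\<^sup>2"
proof -
  have "sq_norm_sum N e \<le> (\<Sum>i<N. 2 * (norm (e 0 - e i))\<^sup>2 + 2 * (norm (e 0))\<^sup>2)"
    unfolding sq_norm_sum_def
    using norm_add_sq_le[of "e 0" "e i - e 0" for i]
    by (intro sum_mono) (simp add: norm_minus_commute add.commute)
  also have "\<dots> = 2 * (\<Sum>i<N. (norm (e 0 - e i))\<^sup>2) + 2 * real N * (norm (e 0))\<^sup>2"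
    by (simp add: sum.distrib sum_distrib_left)
  finally show ?thesis .
qed

lemma obs_form_root_le:
  fixes e :: "nat \<Rightarrow> real^'n"
  shows "(\<Sum>i<N. \<Sum>k<m i. (H i k \<bullet> e 0)\<^sup>2)
    \<le> 2 * obs_energy N H m e + 2 * obs_gain N H m * (\<Sum>i<N. (norm (e 0 - e i))\<^sup>2)"
proof -
  have "(H i k \<bullet> e 0)\<^sup>2 \<le> 2 * (H i k \<bullet> e i)\<^sup>2 + 2 * ((norm (H i k))\<^sup>2 * (norm (e 0 - e i))\<^sup>2)" for i k
  proof -
    have "(H i k \<bullet> e 0)\<^sup>2 \<le> 2 * (H i k \<bullet> e i)\<^sup>2 + 2 * (H i k \<bullet> (e 0 - e i))\<^sup>2"
      using norm_add_sq_le[of "H i k \<bullet> e i" "H i k \<bullet> (e 0 - e i)"] by (simp add: inner_diff_right)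
    moreover have "(H i k \<bullet> (e 0 - e i))\<^sup>2 \<le> (norm (H i k))\<^sup>2 * (norm (e 0 - e i))\<^sup>2"
      using Cauchy_Schwarz_ineq2[of "H i k" "e 0 - e i"]
      by (metis abs_ge_zero power2_abs power_mono power_mult_distrib)
    ultimately show ?thesis by linarith
  qed
  hence "(\<Sum>i<N. \<Sum>k<m i. (H i k \<bullet> e 0)\<^sup>2)
      \<le> (\<Sum>i<N. \<Sum>k<m i. 2 * (H i k \<bullet> e i)\<^sup>2 + 2 * ((norm (H i k))\<^sup>2 * (norm (e 0 - e i))\<^sup>2))"
    by (intro sum_mono)
  also have "\<dots> = 2 * obs_energy N H m e
      + 2 * (\<Sum>i<N. (\<Sum>k<m i. (norm (H i k))\<^sup>2) * (norm (e 0 - e i))\<^sup>2)"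
    unfolding obs_energy_def by (simp add: sum.distrib sum_distrib_left sum_distrib_right)
  also have "\<dots> \<le> 2 * obs_energy N H m e + 2 * (\<Sum>i<N. obs_gain N H m * (norm (e 0 - e i))\<^sup>2)"
    using obs_gain_ge_row by (auto intro!: sum_mono mult_right_mono)
  finally show ?thesis by (simp add: sum_distrib_left mult.assoc)
qed

lemma sq_norm_sum_le_spread_obs_energy:
  fixes e :: "nat \<Rightarrow> real^'n"
  assumes g: "g > 0" "\<And>z::real^'n. g * (norm z)\<^sup>2 \<le> (\<Sum>i<N. \<Sum>k<m i. (H i k \<bullet> z)\<^sup>2)"
  shows "g * sq_norm_sum N e \<le> (2 * g + 4 * real N * obs_gain N H m) * (\<Sum>i<N. (norm (e 0 - e i))\<^sup>2)
    + 4 * real N * obs_energy N H m e"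
proof -
  define D where "D = (\<Sum>i<N. (norm (e 0 - e i))\<^sup>2)"
  define h where "h = obs_gain N H m"
  have root: "g * (norm (e 0))\<^sup>2 \<le> 2 * obs_energy N H m e + 2 * h * D"
    using g(2)[of "e 0"] obs_form_root_le[where N = N and H = H and m = m and e = e]
    unfolding D_def h_def by linarith
  have "g * sq_norm_sum N e \<le> g * (2 * D + 2 * real N * (norm (e 0))\<^sup>2)"
    using sq_norm_sum_le_spread[of N e] g(1) unfolding D_def by (intro mult_left_mono) auto
  also have "\<dots> = 2 * g * D + 2 * real N * (g * (norm (e 0))\<^sup>2)" by (simp add: algebra_simps)
  also have "\<dots> \<le> 2 * g * D + 2 * real N * (2 * obs_energy N H m e + 2 * h * D)"
    using root by (intro add_left_mono mult_left_mono) auto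
  also have "\<dots> = (2 * g + 4 * real N * h) * D + 4 * real N * obs_energy N H m e"
    by (simp add: algebra_simps)
  finally show ?thesis unfolding D_def h_def .
qed

lemma sq_norm_sum_le_disagreement_obs_energy:
  fixes H :: "nat \<Rightarrow> nat \<Rightarrow> real^'n"
  assumes connected: "\<forall>i<N. \<forall>j<N. (i, j) \<in> {(p, q). p < N \<and> q < N \<and> adj p q}\<^sup>*"
    and rank: "rank (Gmat N H m) = CARD('n)"
  shows "\<exists>K>0. \<forall>e::nat \<Rightarrow> real^'n.
    sq_norm_sum N e \<le> K * (disagreement N adj e + obs_energy N H m e)"
proof -
  obtain C where C: "C \<ge> 0"
    "\<And>e::nat \<Rightarrow> real^'n. (\<Sum>i<N. (norm (e 0 - e i))\<^sup>2) \<le> C * disagreement N adj e"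
    using spread_le_disagreement[OF connected] by blast
  obtain g where g: "g > 0" "\<And>z::real^'n. g * (norm z)\<^sup>2 \<le> (\<Sum>i<N. \<Sum>k<m i. (H i k \<bullet> z)\<^sup>2)"
    using obs_form_coercive[OF rank] by blast
  define A where "A = (2 * g + 4 * real N * obs_gain N H m) * C"
  define B where "B = max A (4 * real N) + 1"
  have A: "A \<ge> 0" unfolding A_def using g(1) C(1) obs_gain_nonneg[of N H m] by simp
  have "sq_norm_sum N e \<le> B / g * (disagreement N adj e + obs_energy N H m e)" for e :: "nat \<Rightarrow> real^'n"
  proof -
    have "g * sq_norm_sum N e \<le> A * disagreement N adj e + 4 * real N * obs_energy N H m e"
      using sq_norm_sum_le_spread_obs_energy[OF g, of e]
        mult_left_mono[OF C(2)[of e], of "2 * g + 4 * real N * obs_gain N H m"] g(1)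
        obs_gain_nonneg[of N H m]
      unfolding A_def by (simp add: mult.assoc)
    also have "\<dots> \<le> B * disagreement N adj e + B * obs_energy N H m e"
      unfolding B_def using disagreement_nonneg[of N adj e] obs_energy_nonneg[of N H m e]
      by (intro add_mono mult_right_mono) auto
    finally show ?thesis using g(1) by (simp add: field_simps)
  qed
  moreover have "B / g > 0" unfolding B_def using A g(1) by simp
  ultimately show ?thesis by blast
qed

lemma sq_norm_sum_coercive:
  fixes H :: "nat \<Rightarrow> nat \<Rightarrow> real^'n"
  assumes connected: "\<forall>i<N. \<forall>j<N. (i, j) \<in> {(p, q). p < N \<and> q < N \<and> adj p q}\<^sup>*"
    and rank: "rank (Gmat N H m) = CARD('n)" and \<kappa>: "\<kappa> > 0"
  shows "\<exists>c>0. \<forall>e::nat \<Rightarrow> real^'n.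
    c * sq_norm_sum N e \<le> \<kappa> / 2 * disagreement N adj e + obs_energy N H m e"
proof -
  obtain K where K: "K > 0" "\<And>e::nat \<Rightarrow> real^'n.
      sq_norm_sum N e \<le> K * (disagreement N adj e + obs_energy N H m e)"
    using sq_norm_sum_le_disagreement_obs_energy[OF connected rank] by blast
  define \<mu> where "\<mu> = min (\<kappa> / 2) 1"
  have \<mu>: "\<mu> > 0" "\<mu> \<le> \<kappa> / 2" "\<mu> \<le> 1" unfolding \<mu>_def using \<kappa> by auto
  have "\<mu> / K * sq_norm_sum N e \<le> \<kappa> / 2 * disagreement N adj e + obs_energy N H m e"
    for e :: "nat \<Rightarrow> real^'n"
  proof -
    have "\<mu> / K * sq_norm_sum N e \<le> \<mu> * disagreement N adj e + \<mu> * obs_energy N H m e"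
      using K \<mu>(1) mult_left_mono[OF K(2)[of e], of "\<mu> / K"] by (simp add: algebra_simps)
    also have "\<dots> \<le> \<kappa> / 2 * disagreement N adj e + obs_energy N H m e"
      using \<mu> disagreement_nonneg[of N adj e] obs_energy_nonneg[of N H m e]
      by (intro add_mono mult_right_mono mult_left_le_one_le) auto
    finally show ?thesis .
  qed
  then show ?thesis using \<mu>(1) K(1) by (intro exI[of _ "\<mu> / K"]) auto
qed

section \<open>Convergence of the perturbed mean recursion\<close>

lemma L2_set_mean_update_le:
  fixes e :: "nat \<Rightarrow> real^'n"
  assumes sym: "\<And>i j. adj i j = adj j i"
    and al: "al \<ge> 0" "2 * al * obs_gain N H m \<le> 1" and be: "4 * be * real N \<le> 1"
    and c: "c \<ge> 0" "c * al \<le> 1" and \<kappa>: "\<kappa> \<ge> 0" "\<kappa> * al \<le> be"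
    and coercive: "c * sq_norm_sum N e \<le> \<kappa> / 2 * disagreement N adj e + obs_energy N H m e"
  shows "L2_set (\<lambda>i. norm (mean_update N adj H m al be e i)) {..<N}
    \<le> (1 - c / 2 * al) * L2_set (\<lambda>i. norm (e i)) {..<N}"
proof -
  define F where "F = mean_update N adj H m al be e"
  have be_nonneg: "be \<ge> 0" using \<kappa> al by (meson mult_nonneg_nonneg order_trans)
  have "sq_norm_sum N F \<le> sq_norm_sum N e - al * obs_energy N H m e - be / 2 * disagreement N adj e"
    unfolding F_def using sq_norm_sum_mean_update_le[OF sym al be_nonneg be] .
  also have "\<dots> \<le> sq_norm_sum N e - al * (\<kappa> / 2 * disagreement N adj e + obs_energy N H m e)"
    using mult_right_mono[OF \<kappa>(2) disagreement_nonneg[of N adj e]] by (simp add: algebra_simps)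
  also have "\<dots> \<le> (1 - c * al) * sq_norm_sum N e"
    using mult_left_mono[OF coercive al(1)] by (simp add: algebra_simps)
  finally have "sqrt (sq_norm_sum N F) \<le> sqrt (1 - c * al) * sqrt (sq_norm_sum N e)"
    by (metis real_sqrt_le_mono real_sqrt_mult)
  also have "\<dots> \<le> (1 - c / 2 * al) * sqrt (sq_norm_sum N e)"
    using sqrt_one_minus_le[of "c * al"] c al sq_norm_sum_nonneg[of N e] by (intro mult_right_mono) auto
  finally show ?thesis unfolding F_def L2_set_def sq_norm_sum_def .
qed

lemma L2_set_perturbed_mean_update_le:
  fixes e e' :: "nat \<Rightarrow> real^'n"
  assumes sym: "\<And>i j. adj i j = adj j i"
    and al: "al \<ge> 0" "2 * al * obs_gain N H m \<le> 1" and be: "4 * be * real N \<le> 1"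
    and c: "c \<ge> 0" "c * al \<le> 1" and \<kappa>: "\<kappa> \<ge> 0" "\<kappa> * al \<le> be"
    and coercive: "c * sq_norm_sum N e \<le> \<kappa> / 2 * disagreement N adj e + obs_energy N H m e"
    and residual: "\<And>i. i < N \<Longrightarrow> norm (e' i - mean_update N adj H m al be e i) \<le> P"
  shows "L2_set (\<lambda>i. norm (e' i)) {..<N}
    \<le> (1 - c / 2 * al) * L2_set (\<lambda>i. norm (e i)) {..<N} + real N * P"
proof -
  define F where "F = mean_update N adj H m al be e"
  have "L2_set (\<lambda>i. norm (e' i)) {..<N} \<le> L2_set (\<lambda>i. norm (F i) + norm (e' i - F i)) {..<N}"
    by (intro L2_set_mono) (auto simp: norm_triangle_sub)
  also have "\<dots> \<le> L2_set (\<lambda>i. norm (F i)) {..<N} + L2_set (\<lambda>i. norm (e' i - F i)) {..<N}"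
    by (rule L2_set_triangle_ineq)
  also have "\<dots> \<le> (1 - c / 2 * al) * L2_set (\<lambda>i. norm (e i)) {..<N} + (\<Sum>i<N. norm (e' i - F i))"
    unfolding F_def using L2_set_mean_update_le[OF sym al be c \<kappa> coercive]
    by (intro add_mono L2_set_le_sum) auto
  also have "(\<Sum>i<N. norm (e' i - F i)) \<le> real N * P"
    using residual sum_bounded_above[of "{..<N}" "\<lambda>i. norm (e' i - F i)" P] unfolding F_def by simp
  finally show ?thesis by simp
qed

lemma perturbed_mean_update_tendsto_zero:
  fixes e :: "nat \<Rightarrow> nat \<Rightarrow> real^'n" and H :: "nat \<Rightarrow> nat \<Rightarrow> real^'n"
  assumes sym: "\<And>i j. adj i j = adj j i"
    and connected: "\<forall>i<N. \<forall>j<N. (i, j) \<in> {(p, q). p < N \<and> q < N \<and> adj p q}\<^sup>*"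
    and rank: "rank (Gmat N H m) = CARD('n)"
    and al_pos: "\<And>t. al t > 0" and al_lim: "al \<longlonglongrightarrow> 0" and al_divergent: "\<not> summable al"
    and be_lim: "be \<longlonglongrightarrow> 0" and \<kappa>: "\<kappa> > 0" "\<And>t. \<kappa> * al t \<le> be t"
    and residual: "\<And>t i. i < N \<Longrightarrow> norm (e (Suc t) i - mean_update N adj H m (al t) (be t) (e t) i) \<le> P t"
    and negligible: "P \<in> o(al)"
    and i: "i < N"
  shows "(\<lambda>t. e t i) \<longlonglongrightarrow> 0"
proof -
  obtain c where c: "c > 0" "\<And>f::nat \<Rightarrow> real^'n.
      c * sq_norm_sum N f \<le> \<kappa> / 2 * disagreement N adj f + obs_energy N H m f"
    using sq_norm_sum_coercive[OF connected rank \<kappa>(1)] by blast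
  define u where "u t = L2_set (\<lambda>j. norm (e t j)) {..<N}" for t
  define \<gamma> where "\<gamma> t = c / 2 * al t" for t
  have "eventually (\<lambda>t. 2 * al t * obs_gain N H m < 1) sequentially"
    "eventually (\<lambda>t. 4 * be t * real N < 1) sequentially"
    "eventually (\<lambda>t. c * al t < 1) sequentially"
    using al_lim be_lim
    by (auto intro!: order_tendstoD(2) tendsto_mult_left_zero tendsto_mult_right_zero)
  hence step: "eventually (\<lambda>t. 0 \<le> \<gamma> t \<and> \<gamma> t \<le> 1 \<and> u (Suc t) \<le> (1 - \<gamma> t) * u t + real N * P t)
      sequentially"
  proof eventually_elim
    case (elim t)
    have "u (Suc t) \<le> (1 - \<gamma> t) * u t + real N * P t"
      unfolding u_def \<gamma>_def using elim c \<kappa> al_pos[of t]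
      by (intro L2_set_perturbed_mean_update_le[where \<kappa> = \<kappa>, OF sym _ _ _ _ _ _ _ c(2) residual]) auto
    then show ?case using elim c(1) al_pos[of t] unfolding \<gamma>_def by simp
  qed
  have divergent: "\<not> summable \<gamma>"
    using al_divergent c(1) summable_cmult_iff[of "c / 2" al] unfolding \<gamma>_def by simp
  have small: "(\<lambda>t. real N * P t) \<in> o(\<gamma>)"
    unfolding \<gamma>_def using negligible c(1) i
    by (simp add: landau_o.small.cmult_in_iff landau_o.small.cmult)
  have "u \<longlonglongrightarrow> 0"
    by (rule tendsto_zero_of_perturbed_contraction[OF _ step divergent small]) (simp add: u_def)
  moreover have "eventually (\<lambda>t. norm (e t i) \<le> u t) sequentially"
    unfolding u_def using i by (intro always_eventually allI member_le_L2_set) auto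
  ultimately show ?thesis by (rule Lim_null_comparison[rotated])
qed

section \<open>Mean dynamics of the event-triggered estimator\<close>

lemma est_Suc_fst: "fst (est N adj H m al be \<rho> x0 y (Suc t)) i =
   fst (est N adj H m al be \<rho> x0 y t) i
   + al t *\<^sub>R HTmul H m i (\<lambda>k. y t i k - Hmul H i (fst (est N adj H m al be \<rho> x0 y t) i) k)
   + be t *\<^sub>R (\<Sum>j\<in>{j. j < N \<and> adj i j}.
       snd (est N adj H m al be \<rho> x0 y t) j - fst (est N adj H m al be \<rho> x0 y t) i)"
  by (simp add: Let_def)

lemma est_Suc_snd: "snd (est N adj H m al be \<rho> x0 y (Suc t)) i =
   (if norm (fst (est N adj H m al be \<rho> x0 y (Suc t)) i - snd (est N adj H m al be \<rho> x0 y t) i)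
        > 1 / (real (Suc t) + 1) powr \<rho> i
    then fst (est N adj H m al be \<rho> x0 y (Suc t)) i else snd (est N adj H m al be \<rho> x0 y t) i)"
  by (simp add: Let_def)

lemma norm_est_transmission_gap_le:
  "norm (fst (est N adj H m al be \<rho> x0 y t) i - snd (est N adj H m al be \<rho> x0 y t) i)
    \<le> 1 / (real t + 1) powr \<rho> i"
proof (cases t)
  case (Suc s)
  show ?thesis unfolding Suc est_Suc_snd[of N adj H m al be \<rho> x0 y s i]
    by (auto simp: not_less)
qed simp

lemma norm_est_snd_Suc_le:
  "norm (snd (est N adj H m al be \<rho> x0 y (Suc t)) i)
    \<le> norm (fst (est N adj H m al be \<rho> x0 y (Suc t)) i) + norm (snd (est N adj H m al be \<rho> x0 y t) i)"
proof -
  let ?x = "fst (est N adj H m al be \<rho> x0 y (Suc t)) i" and ?l = "snd (est N adj H m al be \<rho> x0 y t) i"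
  have "snd (est N adj H m al be \<rho> x0 y (Suc t)) i = ?x \<or> snd (est N adj H m al be \<rho> x0 y (Suc t)) i = ?l"
    unfolding est_Suc_snd[of N adj H m al be \<rho> x0 y t i] by simp
  then show ?thesis by auto
qed

lemma noisy_innovation_integral:
  fixes xf :: "'a \<Rightarrow> real^'n" and \<theta> :: "real^'n" and H :: "nat \<Rightarrow> nat \<Rightarrow> real^'n"
  assumes prob: "prob_space M" and xf: "integrable M xf"
    and noise: "\<And>k. k < m i \<Longrightarrow> integrable M (\<lambda>\<omega>. vv \<omega> k) \<and> integral\<^sup>L M (\<lambda>\<omega>. vv \<omega> k) = 0"
  defines "inn \<equiv> \<lambda>\<omega>. HTmul H m i (\<lambda>k. Hmul H i \<theta> k + vv \<omega> k - Hmul H i (xf \<omega>) k)"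
  shows "integrable M inn"
    and "integral\<^sup>L M inn = - HTmul H m i (Hmul H i (integral\<^sup>L M xf - \<theta>))"
proof -
  interpret P: prob_space M by (rule prob)
  define r where "r k \<omega> = H i k \<bullet> \<theta> + vv \<omega> k - H i k \<bullet> xf \<omega>" for k \<omega>
  have r: "integrable M (r k) \<and> integral\<^sup>L M (r k) = H i k \<bullet> \<theta> - H i k \<bullet> integral\<^sup>L M xf"
    if "k < m i" for k
    using noise[OF that] xf unfolding r_def
    by (simp add: Bochner_Integration.integral_diff Bochner_Integration.integral_add
        integrable_inner_right P.prob_space)
  have inn: "inn = (\<lambda>\<omega>. \<Sum>k<m i. r k \<omega> *\<^sub>R H i k)"
    unfolding inn_def r_def HTmul_def Hmul_def ..
  show "integrable M inn"
    unfolding inn using r by (intro Bochner_Integration.integrable_sum integrable_scaleR_left) auto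
  have "integral\<^sup>L M inn = (\<Sum>k<m i. (H i k \<bullet> \<theta> - H i k \<bullet> integral\<^sup>L M xf) *\<^sub>R H i k)"
    unfolding inn using r by (subst Bochner_Integration.integral_sum) (auto intro!: sum.cong)
  also have "\<dots> = - HTmul H m i (Hmul H i (integral\<^sup>L M xf - \<theta>))"
    unfolding HTmul_def Hmul_def
    by (simp add: inner_diff_right sum_negf[symmetric] scaleR_diff_left algebra_simps)
  finally show "integral\<^sup>L M inn = - HTmul H m i (Hmul H i (integral\<^sup>L M xf - \<theta>))" .
qed

lemma noisy_update_integral:
  fixes xf :: "'a \<Rightarrow> real^'n" and \<theta> :: "real^'n" and H :: "nat \<Rightarrow> nat \<Rightarrow> real^'n"
    and al be :: real
  assumes prob: "prob_space M" and xf: "integrable M xf"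
    and lf: "\<And>j. j \<in> S \<Longrightarrow> integrable M (lf j)"
    and noise: "\<And>k. k < m i \<Longrightarrow> integrable M (\<lambda>\<omega>. vv \<omega> k) \<and> integral\<^sup>L M (\<lambda>\<omega>. vv \<omega> k) = 0"
  defines "upd \<equiv> \<lambda>\<omega>. xf \<omega> + al *\<^sub>R HTmul H m i (\<lambda>k. Hmul H i \<theta> k + vv \<omega> k - Hmul H i (xf \<omega>) k)
      + be *\<^sub>R (\<Sum>j\<in>S. lf j \<omega> - xf \<omega>)"
  shows "integrable M upd"
    and "integral\<^sup>L M upd - \<theta> = (integral\<^sup>L M xf - \<theta>)
      - al *\<^sub>R HTmul H m i (Hmul H i (integral\<^sup>L M xf - \<theta>))
      + be *\<^sub>R (\<Sum>j\<in>S. integral\<^sup>L M (lf j) - integral\<^sup>L M xf)"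
proof -
  note innovation = noisy_innovation_integral[OF prob xf noise, where \<theta> = \<theta> and H = H]
  have consensus: "integrable M (\<lambda>\<omega>. \<Sum>j\<in>S. lf j \<omega> - xf \<omega>)"
    "integral\<^sup>L M (\<lambda>\<omega>. \<Sum>j\<in>S. lf j \<omega> - xf \<omega>) = (\<Sum>j\<in>S. integral\<^sup>L M (lf j) - integral\<^sup>L M xf)"
    using lf xf by (auto simp: Bochner_Integration.integral_sum intro!: sum.cong)
  show "integrable M upd" unfolding upd_def using xf innovation(1) consensus(1) by simp
  show "integral\<^sup>L M upd - \<theta> = (integral\<^sup>L M xf - \<theta>)
      - al *\<^sub>R HTmul H m i (Hmul H i (integral\<^sup>L M xf - \<theta>))
      + be *\<^sub>R (\<Sum>j\<in>S. integral\<^sup>L M (lf j) - integral\<^sup>L M xf)"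
    unfolding upd_def using xf innovation consensus by (simp add: Bochner_Integration.integral_add)
qed

definition noisy_est :: "nat \<Rightarrow> (nat \<Rightarrow> nat \<Rightarrow> bool) \<Rightarrow> (nat \<Rightarrow> nat \<Rightarrow> real^'n) \<Rightarrow> (nat \<Rightarrow> nat)
   \<Rightarrow> (nat \<Rightarrow> real) \<Rightarrow> (nat \<Rightarrow> real) \<Rightarrow> (nat \<Rightarrow> real) \<Rightarrow> (nat \<Rightarrow> real^'n) \<Rightarrow> real^'n
   \<Rightarrow> (nat \<Rightarrow> nat \<Rightarrow> 'a \<Rightarrow> nat \<Rightarrow> real) \<Rightarrow> nat \<Rightarrow> 'a \<Rightarrow> (nat \<Rightarrow> real^'n) \<times> (nat \<Rightarrow> real^'n)" where
  "noisy_est N adj H m al be \<rho> x0 \<theta> v t \<omega> =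
     est N adj H m al be \<rho> x0 (\<lambda>t i k. Hmul H i \<theta> k + v t i \<omega> k) t"

definition zero_mean_noise :: "'a measure \<Rightarrow> nat \<Rightarrow> (nat \<Rightarrow> nat) \<Rightarrow> (nat \<Rightarrow> nat \<Rightarrow> 'a \<Rightarrow> nat \<Rightarrow> real)
   \<Rightarrow> bool" where
  "zero_mean_noise M N m v \<longleftrightarrow> (\<forall>t i k. i < N \<longrightarrow> k < m i \<longrightarrow>
     integrable M (\<lambda>\<omega>. v t i \<omega> k) \<and> integral\<^sup>L M (\<lambda>\<omega>. v t i \<omega> k) = 0)"

lemma noisy_est_integrable:
  assumes prob: "prob_space M"
    and noise: "zero_mean_noise M N m v"
    and i: "i < N"
  shows "integrable M (\<lambda>\<omega>. fst (noisy_est N adj H m al be \<rho> x0 \<theta> v t \<omega>) i)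
    \<and> integrable M (\<lambda>\<omega>. snd (noisy_est N adj H m al be \<rho> x0 \<theta> v t \<omega>) i)"
  using i
proof (induction t arbitrary: i)
  case (Suc t)
  let ?X = "noisy_est N adj H m al be \<rho> x0 \<theta> v"
  have x: "integrable M (\<lambda>\<omega>. fst (?X (Suc t) \<omega>) i)"
    unfolding noisy_est_def est_Suc_fst
    by (rule noisy_update_integral(1)[OF prob]) (use Suc noise in \<open>auto simp: noisy_est_def zero_mean_noise_def\<close>)
  have l: "integrable M (\<lambda>\<omega>. snd (?X t \<omega>) i)" using Suc by blast
  have [measurable]: "(\<lambda>\<omega>. fst (?X (Suc t) \<omega>) i) \<in> borel_measurable M"
    "(\<lambda>\<omega>. snd (?X t \<omega>) i) \<in> borel_measurable M"
    using x l by (auto intro: borel_measurable_integrable)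
  let ?bound = "\<lambda>\<omega>. norm (fst (?X (Suc t) \<omega>) i) + norm (snd (?X t \<omega>) i)"
  have "integrable M (\<lambda>\<omega>. snd (?X (Suc t) \<omega>) i)"
  proof (rule Bochner_Integration.integrable_bound)
    show "integrable M ?bound"
      using x l by (intro Bochner_Integration.integrable_add integrable_norm)
    show "(\<lambda>\<omega>. snd (?X (Suc t) \<omega>) i) \<in> borel_measurable M"
      unfolding noisy_est_def est_Suc_snd unfolding noisy_est_def[symmetric] by measurable
    have dominated: "norm (snd (?X (Suc t) \<omega>) i) \<le> norm (?bound \<omega>)" for \<omega>
    proof -
      have "norm (snd (?X (Suc t) \<omega>) i) \<le> ?bound \<omega>"
        unfolding noisy_est_def by (rule norm_est_snd_Suc_le)
      also have "\<dots> \<le> norm (?bound \<omega>)" by (simp only: real_norm_def abs_ge_self)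
      finally show ?thesis .
    qed
    show "AE \<omega> in M. norm (snd (?X (Suc t) \<omega>) i) \<le> norm (?bound \<omega>)"
      by (intro AE_I2 dominated)
  qed
  with x show ?case by blast
qed (simp add: noisy_est_def finite_measure.integrable_const prob_space.finite_measure[OF prob])

lemma norm_mean_transmission_gap_le:
  assumes prob: "prob_space M"
    and noise: "zero_mean_noise M N m v"
    and j: "j < N"
  shows "norm (integral\<^sup>L M (\<lambda>\<omega>. snd (noisy_est N adj H m al be \<rho> x0 \<theta> v t \<omega>) j)
      - integral\<^sup>L M (\<lambda>\<omega>. fst (noisy_est N adj H m al be \<rho> x0 \<theta> v t \<omega>) j))
    \<le> 1 / (real t + 1) powr \<rho> j"
proof -
  interpret P: prob_space M by (rule prob)
  let ?x = "\<lambda>\<omega>. fst (noisy_est N adj H m al be \<rho> x0 \<theta> v t \<omega>) j"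
    and ?l = "\<lambda>\<omega>. snd (noisy_est N adj H m al be \<rho> x0 \<theta> v t \<omega>) j"
  have integrable: "integrable M ?x" "integrable M ?l"
    using noisy_est_integrable[OF prob noise j] by blast+
  have "norm (integral\<^sup>L M ?l - integral\<^sup>L M ?x) \<le> integral\<^sup>L M (\<lambda>\<omega>. norm (?x \<omega> - ?l \<omega>))"
    using integral_norm_bound[of M "\<lambda>\<omega>. ?x \<omega> - ?l \<omega>"] integrable
    by (simp add: Bochner_Integration.integral_diff norm_minus_commute)
  also have "\<dots> \<le> 1 / (real t + 1) powr \<rho> j"
    using integrable unfolding noisy_est_def
    by (intro P.integral_le_const AE_I2 norm_est_transmission_gap_le) auto
  finally show ?thesis .
qed

lemma norm_mean_update_residual_le:
  fixes \<theta> :: "real^'n" and H :: "nat \<Rightarrow> nat \<Rightarrow> real^'n" and adj :: "nat \<Rightarrow> nat \<Rightarrow> bool"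
    and al :: "nat \<Rightarrow> real" and x0 :: "nat \<Rightarrow> real^'n"
  assumes prob: "prob_space M"
    and noise: "zero_mean_noise M N m v"
    and i: "i < N" and be: "be t \<ge> 0" and \<rho>0: "\<And>j. j < N \<Longrightarrow> \<rho>0 \<le> \<rho> j"
  defines "e \<equiv> \<lambda>t j. integral\<^sup>L M (\<lambda>\<omega>. fst (noisy_est N adj H m al be \<rho> x0 \<theta> v t \<omega>) j) - \<theta>"
  shows "norm (e (Suc t) i - mean_update N adj H m (al t) (be t) (e t) i)
    \<le> real N * be t * (real t + 1) powr (- \<rho>0)"
proof -
  let ?X = "noisy_est N adj H m al be \<rho> x0 \<theta> v"
  define gap where "gap j = integral\<^sup>L M (\<lambda>\<omega>. snd (?X t \<omega>) j) - integral\<^sup>L M (\<lambda>\<omega>. fst (?X t \<omega>) j)" for j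
  let ?S = "{j. j < N \<and> adj i j}"
  have gap: "norm (gap j) \<le> (real t + 1) powr (- \<rho>0)" if "j \<in> ?S" for j
  proof -
    have "norm (gap j) \<le> 1 / (real t + 1) powr \<rho> j"
      unfolding gap_def using that by (intro norm_mean_transmission_gap_le[OF prob noise]) auto
    also have "\<dots> = (real t + 1) powr (- \<rho> j)" by (simp add: powr_minus_divide)
    also have "\<dots> \<le> (real t + 1) powr (- \<rho>0)"
      using \<rho>0 that by (intro powr_mono) auto
    finally show ?thesis .
  qed
  have integrable: "integrable M (\<lambda>\<omega>. fst (?X t \<omega>) j)" "integrable M (\<lambda>\<omega>. snd (?X t \<omega>) j)"
    if "j < N" for j
    using noisy_est_integrable[OF prob noise that] by blast+
  have "e (Suc t) i = (e t i - al t *\<^sub>R HTmul H m i (Hmul H i (e t i))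
      + be t *\<^sub>R (\<Sum>j\<in>?S. integral\<^sup>L M (\<lambda>\<omega>. snd (?X t \<omega>) j) - integral\<^sup>L M (\<lambda>\<omega>. fst (?X t \<omega>) i)))"
    unfolding e_def noisy_est_def est_Suc_fst
    by (rule noisy_update_integral(2)[OF prob])
      (use integrable i noise in \<open>auto simp: noisy_est_def zero_mean_noise_def\<close>)
  also have "\<dots> = mean_update N adj H m (al t) (be t) (e t) i + be t *\<^sub>R (\<Sum>j\<in>?S. gap j)"
    unfolding mean_update_def gap_def e_def
    by (simp add: sum.distrib[symmetric] scaleR_add_right[symmetric] algebra_simps)
  finally have "norm (e (Suc t) i - mean_update N adj H m (al t) (be t) (e t) i)
      = be t * norm (\<Sum>j\<in>?S. gap j)" using be by simp
  also have "\<dots> \<le> be t * (real (card ?S) * (real t + 1) powr (- \<rho>0))"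
    using gap be by (intro mult_left_mono order_trans[OF norm_sum sum_bounded_above]) auto
  also have "\<dots> \<le> be t * (real N * (real t + 1) powr (- \<rho>0))"
    using be card_neighbors_le[of N adj i] by (intro mult_left_mono mult_right_mono) auto
  finally show ?thesis by (simp add: mult_ac)
qed

section \<open>Polynomial step sizes\<close>

lemma polynomial_step_sizes:
  fixes a b \<tau>1 \<tau>2 :: real
  assumes a: "a > 0" and b: "b > 0" and \<tau>: "0 < \<tau>2" "\<tau>2 \<le> \<tau>1" "\<tau>1 \<le> 1"
  shows "(\<lambda>t. a / (real t + 1) powr \<tau>1) \<longlonglongrightarrow> 0"
    and "(\<lambda>t. b / (real t + 1) powr \<tau>2) \<longlonglongrightarrow> 0"
    and "\<not> summable (\<lambda>t. a / (real t + 1) powr \<tau>1)"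
    and "b / a * (a / (real t + 1) powr \<tau>1) \<le> b / (real t + 1) powr \<tau>2"
proof -
  show "(\<lambda>t. a / (real t + 1) powr \<tau>1) \<longlonglongrightarrow> 0" "(\<lambda>t. b / (real t + 1) powr \<tau>2) \<longlonglongrightarrow> 0"
    using \<tau> by real_asymp+
  have dominated: "a * inverse (real (Suc t)) \<le> a / (real t + 1) powr \<tau>1" for t
    using a \<tau> powr_mono[of \<tau>1 1 "real t + 1"]
    by (simp add: divide_inverse[symmetric] add.commute divide_left_mono)
  have harmonic: "\<not> summable (\<lambda>t. inverse (real (Suc t)))"
    using not_summable_harmonic by (subst summable_Suc_iff)
  show "\<not> summable (\<lambda>t. a / (real t + 1) powr \<tau>1)"
  proof (intro notI)
    assume "summable (\<lambda>t. a / (real t + 1) powr \<tau>1)"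
    then have "summable (\<lambda>t. a * inverse (real (Suc t)))"
      by (rule summable_comparison_test'[where N = 0]) (use a dominated in auto)
    with harmonic a show False by (simp add: summable_cmult_iff)
  qed
  show "b / a * (a / (real t + 1) powr \<tau>1) \<le> b / (real t + 1) powr \<tau>2"
    using a b \<tau> powr_mono[of \<tau>2 \<tau>1 "real t + 1"] by (simp add: divide_left_mono)
qed

lemma polynomial_perturbation_smallo:
  fixes a b \<tau>1 \<tau>2 \<rho>0 C :: real
  assumes "a > 0" and "\<rho>0 > \<tau>1 - \<tau>2"
  shows "(\<lambda>t::nat. C * (b / (real t + 1) powr \<tau>2) * (real t + 1) powr (- \<rho>0))
    \<in> o(\<lambda>t. a / (real t + 1) powr \<tau>1)"
  using assms by real_asymp

theorem theorem2:
  fixes M :: "'a measure"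
    and N :: nat
    and adj :: "nat \<Rightarrow> nat \<Rightarrow> bool"
    and H :: "nat \<Rightarrow> nat \<Rightarrow> real^'n"
    and m :: "nat \<Rightarrow> nat"
    and \<theta> :: "real^'n"
    and v :: "nat \<Rightarrow> nat \<Rightarrow> 'a \<Rightarrow> nat \<Rightarrow> real"
    and R :: "nat \<Rightarrow> nat \<Rightarrow> nat \<Rightarrow> real"
    and \<rho> :: "nat \<Rightarrow> real"
    and x0 :: "nat \<Rightarrow> real^'n"
    and a b \<tau>1 \<tau>2 \<epsilon>1 :: real
  assumes prob: "prob_space M"
    and N_pos: "N \<ge> 1"
    and adj_sym: "\<And>i j. adj i j = adj j i"
    and adj_irrefl: "\<And>i. \<not> adj i i"
    and connected: "\<forall>i<N. \<forall>j<N. (i, j) \<in> {(p, q). p < N \<and> q < N \<and> adj p q}\<^sup>*"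
    and G_full_rank: "rank (Gmat N H m) = CARD('n)"
    and noise_rv: "\<And>t i k. (\<lambda>\<omega>. v t i \<omega> k) \<in> borel_measurable M"
    and noise_zero_mean: "\<And>t i k. i < N \<Longrightarrow> k < m i \<Longrightarrow>
          integrable M (\<lambda>\<omega>. v t i \<omega> k) \<and> integral\<^sup>L M (\<lambda>\<omega>. v t i \<omega> k) = 0"
    and noise_cov: "\<And>t i k l. i < N \<Longrightarrow> k < m i \<Longrightarrow> l < m i \<Longrightarrow>
          integrable M (\<lambda>\<omega>. v t i \<omega> k * v t i \<omega> l) \<and>
          integral\<^sup>L M (\<lambda>\<omega>. v t i \<omega> k * v t i \<omega> l) = R i k l"
    and noise_indep: "prob_space.indep_vars M (\<lambda>_. stack_space)
          (\<lambda>t \<omega>. stackV N m (\<lambda>i k. v t i \<omega> k)) UNIV"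
    and noise_ident: "\<And>t. distr M stack_space (\<lambda>\<omega>. stackV N m (\<lambda>i k. v t i \<omega> k))
          = distr M stack_space (\<lambda>\<omega>. stackV N m (\<lambda>i k. v 0 i \<omega> k))"
    and eps_pos: "\<epsilon>1 > 0"
    and moment: "\<And>t. integrable M (\<lambda>\<omega>. normV N m (\<lambda>i k. v t i \<omega> k) powr (2 + \<epsilon>1))"
    and a_pos: "a > 0" and b_pos: "b > 0"
    and tau: "0 < \<tau>2" "\<tau>2 \<le> \<tau>1" "\<tau>1 \<le> 1"
    and tau1_big: "\<tau>1 > max (\<tau>2 + 1 / (2 + \<epsilon>1)) 0.5"
    and rho_pos: "\<And>j. j < N \<Longrightarrow> \<rho> j > 0"
    and rho0: "Min (\<rho> ` {..<N}) > \<tau>1 - \<tau>2"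
  shows "\<forall>i<N. (\<lambda>t. integral\<^sup>L M (\<lambda>\<omega>.
            fst (est N adj H m (\<lambda>t. a / (real t + 1) powr \<tau>1) (\<lambda>t. b / (real t + 1) powr \<tau>2) \<rho> x0
                  (\<lambda>t i k. Hmul H i \<theta> k + v t i \<omega> k) t) i)) \<longlonglongrightarrow> \<theta>"
proof -
  define al where "al = (\<lambda>t::nat. a / (real t + 1) powr \<tau>1)"
  define be where "be = (\<lambda>t::nat. b / (real t + 1) powr \<tau>2)"
  define \<rho>0 where "\<rho>0 = Min (\<rho> ` {..<N})"
  define e where "e t j = integral\<^sup>L M (\<lambda>\<omega>. fst (noisy_est N adj H m al be \<rho> x0 \<theta> v t \<omega>) j) - \<theta>"
    for t j
  have noise: "zero_mean_noise M N m v"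
    using noise_zero_mean unfolding zero_mean_noise_def by blast
  have \<rho>0_le: "\<rho>0 \<le> \<rho> j" if "j < N" for j
    unfolding \<rho>0_def using that by (intro Min_le) auto
  have "(\<lambda>t. e t i) \<longlonglongrightarrow> 0" if i: "i < N" for i
  proof (rule perturbed_mean_update_tendsto_zero[OF adj_sym connected G_full_rank])
    show "0 < al t" for t unfolding al_def using a_pos by simp
    show "al \<longlonglongrightarrow> 0" "\<not> summable al" "be \<longlonglongrightarrow> 0" "b / a * al t \<le> be t" for t
      using polynomial_step_sizes[OF a_pos b_pos tau] by (simp_all add: al_def be_def)
    show "0 < b / a" using a_pos b_pos by simp
    show "norm (e (Suc t) j - mean_update N adj H m (al t) (be t) (e t) j)
        \<le> real N * be t * (real t + 1) powr (- \<rho>0)" if "j < N" for t j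
      unfolding e_def using b_pos
      by (intro norm_mean_update_residual_le[OF prob noise that _ \<rho>0_le]) (simp add: be_def)
    show "(\<lambda>t. real N * be t * (real t + 1) powr (- \<rho>0)) \<in> o(al)"
      using polynomial_perturbation_smallo[OF a_pos rho0[folded \<rho>0_def], where C = "real N"]
      unfolding al_def be_def .
  qed (rule i)
  then show ?thesis
    unfolding e_def noisy_est_def al_def be_def LIM_zero_iff by blast
qed

end
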